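(* Let $A\in\mathbb{R}^{r\times n}$ ($r\le n$) have full row rank with singular values $\sigma_1=\sigma_2=\dots=\sigma_r$, let $F\in\mathbb{R}^{K\times n}$ with $FA^T\ne0$, and let $\lambda'>0$. Let $D^*=FA^T(AA^T)^{-1}$, $\tilde D^*=FA^T(AA^T+\lambda'I)^{-1}$, and for $M\in\mathbb{R}^{K\times r}$ let $\gamma(M)=\|M\|_F^2\|A\|_F^2/\|MA\|_F^2$. Then $\gamma(\tilde D^* )=\gamma(D^* )=r$.
   Context: $D^*$ and $\tilde D^*$ are the solutions of the unregularized and $\ell_2$-regularized linear regression problems $\min_D\|F-DA\|_F^2$ and $\min_D\|F-DA\|_F^2+\lambda'\|D\|_F^2$; $\gamma$ is the (relative) spectral risk. *)

theory Defs
  imports "HOL-Analysis.Analysis"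
begin

definition is_eigenvalue :: "real^'r^'r \<Rightarrow> real \<Rightarrow> bool" where
  "is_eigenvalue M \<mu> \<longleftrightarrow> (\<exists>v. v \<noteq> 0 \<and> M *v v = \<mu> *\<^sub>R v)"

text \<open>Singular values of a matrix A in R^(r x n) with r \<le> n: the square roots of the
  eigenvalues of A A^T.\<close>
definition singular_values :: "real^'n^'r \<Rightarrow> real set" where
  "singular_values A = {sqrt \<mu> | \<mu>. is_eigenvalue (A ** transpose A) \<mu>}"

definition fro_sq :: "real^'n^'m \<Rightarrow> real" where
  "fro_sq M = (\<Sum>i\<in>UNIV. \<Sum>j\<in>UNIV. (M $ i $ j)\<^sup>2)"

definition spectral_risk :: "real^'n^'r \<Rightarrow> real^'r^'k \<Rightarrow> real" where
  "spectral_risk A M = fro_sq M * fro_sq A / fro_sq (M ** A)"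

end

theory Submission
  imports Defs
begin

text \<open>
  If all singular values of \<open>A\<close> equal \<open>\<sigma>\<close>, the symmetric matrix \<open>A A\<^sup>T\<close> has the single
  eigenvalue \<open>\<sigma>\<^sup>2\<close>; since its largest and smallest eigenvalues bound the Rayleigh quotient,
  \<open>A A\<^sup>T = \<sigma>\<^sup>2 I\<close>, and full row rank gives \<open>\<sigma> \<noteq> 0\<close>. Both \<open>D\<^sup>*\<close> and \<open>D\<^sup>~\<^sup>*\<close> are then
  nonzero multiples of \<open>F A\<^sup>T\<close>, and for every nonzero \<open>M\<close> one has
  \<open>\<parallel>M A\<parallel>\<^sub>F\<^sup>2 = tr (M A A\<^sup>T M\<^sup>T) = \<sigma>\<^sup>2 \<parallel>M\<parallel>\<^sub>F\<^sup>2\<close> and \<open>\<parallel>A\<parallel>\<^sub>F\<^sup>2 = r \<sigma>\<^sup>2\<close>, so \<open>\<gamma>(M) = r\<close>.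
\<close>

lemma quadratic_nonpos_imp_linear_coeff_eq_0:
  fixes a b :: real
  assumes "\<And>t. a * t\<^sup>2 + b * t \<le> 0"
  shows "b = 0"
proof (rule ccontr)
  assume "b \<noteq> 0"
  define u where "u = 1 / (\<bar>a\<bar> + 1)"
  have "u > 0" unfolding u_def by (simp add: add_pos_nonneg)
  have "\<bar>a * u\<bar> < 1" unfolding u_def by (simp add: abs_mult divide_less_eq)
  then have "b\<^sup>2 * u * (a * u + 1) > 0" using \<open>u > 0\<close> \<open>b \<noteq> 0\<close> by simp
  moreover have "a * (b * u)\<^sup>2 + b * (b * u) = b\<^sup>2 * u * (a * u + 1)"
    by (simp add: algebra_simps power2_eq_square)
  ultimately show False using assms[of "b * u"] by linarith
qed

lemma symmetric_matrix_inner_commute: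
  fixes S :: "real^'n^'n"
  assumes "transpose S = S"
  shows "x \<bullet> (S *v y) = y \<bullet> (S *v x)"
  by (metis dot_lmul_matrix inner_commute assms transpose_matrix_vector)

text \<open>A maximiser \<open>v\<close> of the quadratic form on the unit sphere is an eigenvector: the
  quadratic \<open>t \<mapsto> q(v + t y) - \<mu> \<parallel>v + t y\<parallel>\<^sup>2\<close> is maximal at \<open>t = 0\<close>, so its linear
  coefficient \<open>2 y \<bullet> (S v - \<mu> v)\<close> vanishes for every \<open>y\<close>.\<close>

lemma symmetric_matrix_max_eigenvalue:
  fixes S :: "real^'n^'n"
  assumes sym: "transpose S = S"
  obtains v \<mu> where "v \<noteq> 0" "S *v v = \<mu> *\<^sub>R v" "\<And>x. x \<bullet> (S *v x) \<le> \<mu> * (norm x)\<^sup>2"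
proof -
  have "compact (sphere (0::real^'n) 1)" "sphere (0::real^'n) 1 \<noteq> {}" by simp_all
  moreover have "continuous_on (sphere 0 1) (\<lambda>x::real^'n. x \<bullet> (S *v x))"
    by (intro continuous_intros)
  ultimately obtain v where v: "v \<in> sphere 0 1"
    and vmax: "\<forall>y\<in>sphere 0 1. y \<bullet> (S *v y) \<le> v \<bullet> (S *v v)"
    using continuous_attains_sup by blast
  define \<mu> where "\<mu> = v \<bullet> (S *v v)"
  have "v \<bullet> v = 1" using v by (simp add: dot_square_norm)
  have bound: "x \<bullet> (S *v x) \<le> \<mu> * (norm x)\<^sup>2" for x
  proof (cases "x = 0")
    case False
    define y where "y = (1 / norm x) *\<^sub>R x"
    have "y \<in> sphere 0 1" using False by (simp add: y_def)
    then have "y \<bullet> (S *v y) \<le> \<mu>" using vmax \<mu>_def by blast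
    moreover have "y \<bullet> (S *v y) = (x \<bullet> (S *v x)) / (norm x)\<^sup>2"
      by (simp add: y_def matrix_vector_mult_scaleR power2_eq_square)
    ultimately show ?thesis using False by (simp add: divide_le_eq mult.commute)
  qed simp
  have orth: "y \<bullet> (S *v v - \<mu> *\<^sub>R v) = 0" for y
  proof -
    have "(y \<bullet> (S *v y) - \<mu> * (y \<bullet> y)) * t\<^sup>2 + 2 * (y \<bullet> (S *v v - \<mu> *\<^sub>R v)) * t \<le> 0"
      for t :: real
    proof -
      have "(v + t *\<^sub>R y) \<bullet> (S *v (v + t *\<^sub>R y)) \<le> \<mu> * (norm (v + t *\<^sub>R y))\<^sup>2"
        by (rule bound)
      moreover have "(v + t *\<^sub>R y) \<bullet> (S *v (v + t *\<^sub>R y))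
          = \<mu> + 2 * t * (y \<bullet> (S *v v)) + t\<^sup>2 * (y \<bullet> (S *v y))"
        using symmetric_matrix_inner_commute[OF sym, of v y]
        by (simp add: matrix_vector_right_distrib matrix_vector_mult_scaleR inner_add_left
            inner_add_right \<mu>_def power2_eq_square algebra_simps)
      moreover have "(norm (v + t *\<^sub>R y))\<^sup>2 = v \<bullet> v + 2 * t * (y \<bullet> v) + t\<^sup>2 * (y \<bullet> y)"
        unfolding power2_norm_eq_inner
        by (simp add: inner_add_left inner_add_right power2_eq_square algebra_simps inner_commute)
      ultimately show ?thesis using \<open>v \<bullet> v = 1\<close> by (simp add: inner_diff_right algebra_simps)
    qed
    then have "2 * (y \<bullet> (S *v v - \<mu> *\<^sub>R v)) = 0"
      by (rule quadratic_nonpos_imp_linear_coeff_eq_0)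
    then show ?thesis by simp
  qed
  have "v \<noteq> 0" using v by auto
  moreover have "S *v v = \<mu> *\<^sub>R v" using orth[of "S *v v - \<mu> *\<^sub>R v"] by simp
  ultimately show ?thesis using bound by (rule that)
qed

lemma symmetric_matrix_min_eigenvalue:
  fixes S :: "real^'n^'n"
  assumes "transpose S = S"
  obtains v \<mu> where "v \<noteq> 0" "S *v v = \<mu> *\<^sub>R v" "\<And>x. \<mu> * (norm x)\<^sup>2 \<le> x \<bullet> (S *v x)"
proof -
  have neg: "(- S) *v x = - (S *v x)" for x
    by (simp add: matrix_vector_mult_def vec_eq_iff sum_negf)
  have "transpose (- S) = - S" using assms by (simp add: vec_eq_iff transpose_def)
  then obtain v \<mu> where "v \<noteq> 0" and v: "(- S) *v v = \<mu> *\<^sub>R v"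
    and bound: "\<And>x. x \<bullet> ((- S) *v x) \<le> \<mu> * (norm x)\<^sup>2"
    using symmetric_matrix_max_eigenvalue by metis
  show ?thesis
  proof (rule that)
    show "v \<noteq> 0" by fact
    show "S *v v = (- \<mu>) *\<^sub>R v" using v neg[of v] by (metis minus_minus scaleR_minus_left)
    show "(- \<mu>) * (norm x)\<^sup>2 \<le> x \<bullet> (S *v x)" for x using bound[of x] by (simp add: neg)
  qed
qed

lemma symmetric_matrix_eq_0_if_quadratic_form_eq_0:
  fixes B :: "real^'n^'n"
  assumes sym: "transpose B = B" and q: "\<And>x. x \<bullet> (B *v x) = 0"
  shows "B = 0"
proof -
  have "B *v x = 0" for x
  proof -
    have "(x + B *v x) \<bullet> (B *v (x + B *v x)) = 0" by (rule q)
    then have "(B *v x) \<bullet> (B *v x) + x \<bullet> (B *v (B *v x)) = 0"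
      using q[of x] q[of "B *v x"]
      by (simp add: matrix_vector_right_distrib inner_add_left inner_add_right)
    moreover have "x \<bullet> (B *v (B *v x)) = (B *v x) \<bullet> (B *v x)"
      using symmetric_matrix_inner_commute[OF sym] by blast
    ultimately show ?thesis by simp
  qed
  then show ?thesis by (simp add: matrix_eq)
qed

lemma matrix_vector_mult_mat: "mat c *v x = c *\<^sub>R (x :: real^'n)"
  by (simp add: matrix_vector_mult_def mat_def vec_eq_iff if_distrib if_distribR cong: if_cong)

lemma symmetric_matrix_eq_mat_if_unique_eigenvalue:
  fixes S :: "real^'n^'n"
  assumes sym: "transpose S = S" and eig: "\<And>\<mu>. is_eigenvalue S \<mu> \<Longrightarrow> \<mu> = c"
  shows "S = mat c"
proof -
  obtain v\<^sub>1 \<mu>\<^sub>1 where "v\<^sub>1 \<noteq> 0" "S *v v\<^sub>1 = \<mu>\<^sub>1 *\<^sub>R v\<^sub>1"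
    and upper: "\<And>x. x \<bullet> (S *v x) \<le> \<mu>\<^sub>1 * (norm x)\<^sup>2"
    using symmetric_matrix_max_eigenvalue[OF sym] by metis
  then have "\<mu>\<^sub>1 = c" using eig is_eigenvalue_def by blast
  obtain v\<^sub>2 \<mu>\<^sub>2 where "v\<^sub>2 \<noteq> 0" "S *v v\<^sub>2 = \<mu>\<^sub>2 *\<^sub>R v\<^sub>2"
    and lower: "\<And>x. \<mu>\<^sub>2 * (norm x)\<^sup>2 \<le> x \<bullet> (S *v x)"
    using symmetric_matrix_min_eigenvalue[OF sym] by metis
  then have "\<mu>\<^sub>2 = c" using eig is_eigenvalue_def by blast
  have "x \<bullet> (S *v x) = c * (norm x)\<^sup>2" for x
    using upper[of x] lower[of x] unfolding \<open>\<mu>\<^sub>1 = c\<close> \<open>\<mu>\<^sub>2 = c\<close> by (rule antisym)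
  then have "x \<bullet> ((S - mat c) *v x) = 0" for x
    by (simp add: matrix_vector_mult_diff_rdistrib matrix_vector_mult_mat inner_diff_right
        dot_square_norm)
  moreover have "transpose (S - mat c) = S - mat c"
    using sym by (simp add: vec_eq_iff transpose_def mat_def)
  ultimately have "S - mat c = 0"
    using symmetric_matrix_eq_0_if_quadratic_form_eq_0 by blast
  then show ?thesis by simp
qed

lemma eigenvalue_gram_nonneg:
  fixes A :: "real^'n^'r"
  assumes "is_eigenvalue (A ** transpose A) \<mu>"
  shows "\<mu> \<ge> 0"
proof -
  obtain v where "v \<noteq> 0" and v: "(A ** transpose A) *v v = \<mu> *\<^sub>R v"
    using assms unfolding is_eigenvalue_def by blast
  have "v \<bullet> ((A ** transpose A) *v v) = (v v* A) \<bullet> (v v* A)"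
    by (simp add: dot_lmul_matrix flip: matrix_vector_mul_assoc)
  then have "\<mu> * (v \<bullet> v) = (v v* A) \<bullet> (v v* A)" by (simp add: v)
  then have "0 \<le> \<mu> * (v \<bullet> v)" by simp
  moreover have "v \<bullet> v > 0" using \<open>v \<noteq> 0\<close> by simp
  ultimately show ?thesis by (simp add: zero_le_mult_iff)
qed

lemma gram_eq_mat_if_singular_values_eq:
  fixes A :: "real^'n^'r"
  assumes "singular_values A = {\<sigma>}"
  shows "A ** transpose A = mat (\<sigma>\<^sup>2)"
proof (rule symmetric_matrix_eq_mat_if_unique_eigenvalue)
  show "transpose (A ** transpose A) = A ** transpose A"
    by (simp add: matrix_transpose_mul)
  fix \<mu>
  assume eig: "is_eigenvalue (A ** transpose A) \<mu>"
  then have "sqrt \<mu> = \<sigma>" using assms unfolding singular_values_def by blast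
  with eigenvalue_gram_nonneg[OF eig] show "\<mu> = \<sigma>\<^sup>2" by auto
qed

lemma matrix_inv_eqI:
  fixes A :: "'a::semiring_1^'n^'m"
  assumes "A ** B = mat 1" and "B ** A = mat 1"
  shows "matrix_inv A = B"
proof -
  have "A ** matrix_inv A = mat 1 \<and> matrix_inv A ** A = mat 1"
    unfolding matrix_inv_def using assms by (rule someI[of _ B, OF conjI])
  then have "matrix_inv A = matrix_inv A ** (A ** B)" by (simp add: assms)
  also have "\<dots> = B" by (simp add: \<open>_ \<and> _\<close> matrix_mul_assoc)
  finally show ?thesis .
qed

lemma matrix_mul_mat: "X ** mat c = c *\<^sub>R (X :: real^'n^'m)"
  by (simp add: vec_eq_iff matrix_matrix_mult_def mat_def if_distrib if_distribR sum.delta'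
      cong: if_cong)

lemma matrix_inv_mat:
  assumes "c \<noteq> 0"
  shows "matrix_inv (mat c :: real^'n^'n) = mat (1 / c)"
  by (rule matrix_inv_eqI) (unfold matrix_mul_mat, simp_all add: assms vec_eq_iff mat_def)

lemma fro_sq_eq_trace: "fro_sq (M :: real^'n^'m) = trace (M ** transpose M)"
  unfolding fro_sq_def trace_def matrix_matrix_mult_def transpose_def
  by (simp add: power2_eq_square)

lemma fro_sq_eq_0_iff: "fro_sq (M :: real^'n^'m) = 0 \<longleftrightarrow> M = 0"
  unfolding fro_sq_def by (simp add: sum_nonneg_eq_0_iff sum_nonneg vec_eq_iff)

lemma spectral_risk_eq_card_if_gram_eq_mat:
  fixes A :: "real^'n^'r" and M :: "real^'r^'k"
  assumes gram: "A ** transpose A = mat \<mu>" and "\<mu> \<noteq> 0" and "M \<noteq> 0"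
  shows "spectral_risk A M = real CARD('r)"
proof -
  have "fro_sq A = \<mu> * real CARD('r)"
    by (simp add: fro_sq_eq_trace gram trace_def mat_def)
  moreover have "fro_sq (M ** A) = trace (M ** (A ** transpose A) ** transpose M)"
    by (simp add: fro_sq_eq_trace matrix_transpose_mul matrix_mul_assoc)
  then have "fro_sq (M ** A) = \<mu> * fro_sq M"
    by (simp add: gram matrix_mul_mat fro_sq_eq_trace trace_def sum_distrib_left
        flip: scalar_matrix_assoc)
  moreover have "fro_sq M \<noteq> 0" using \<open>M \<noteq> 0\<close> fro_sq_eq_0_iff by blast
  ultimately show ?thesis using \<open>\<mu> \<noteq> 0\<close> by (simp add: spectral_risk_def)
qed

theorem corollary4:
  fixes A :: "real^'n^'r" and F :: "real^'n^'k" and lam :: real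
  assumes "CARD('r) \<le> CARD('n)"
    and "rank A = CARD('r)"
    and "\<exists>\<sigma>. singular_values A = {\<sigma>}"
    and "F ** transpose A \<noteq> 0"
    and "lam > 0"
  shows "spectral_risk A (F ** transpose A ** matrix_inv (A ** transpose A + lam *\<^sub>R mat 1))
           = real CARD('r)
       \<and> spectral_risk A (F ** transpose A ** matrix_inv (A ** transpose A)) = real CARD('r)"
proof -
  obtain \<sigma> where "singular_values A = {\<sigma>}" using assms(3) by blast
  then have gram: "A ** transpose A = mat (\<sigma>\<^sup>2)"
    by (rule gram_eq_mat_if_singular_values_eq)
  have "A \<noteq> 0" using assms(2) rank_eq_0 by fastforce
  have "\<sigma>\<^sup>2 \<noteq> 0"
  proof
    assume "\<sigma>\<^sup>2 = 0"
    then have "fro_sq A = 0" by (simp add: fro_sq_eq_trace gram trace_def)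
    with \<open>A \<noteq> 0\<close> show False by (simp add: fro_sq_eq_0_iff)
  qed
  then have "\<sigma>\<^sup>2 > 0" by simp
  have "A ** transpose A + lam *\<^sub>R mat 1 = mat (\<sigma>\<^sup>2 + lam)"
    by (simp add: gram vec_eq_iff mat_def)
  moreover have "\<sigma>\<^sup>2 + lam \<noteq> 0" using \<open>\<sigma>\<^sup>2 > 0\<close> \<open>lam > 0\<close> by linarith
  ultimately have ridge: "F ** transpose A ** matrix_inv (A ** transpose A + lam *\<^sub>R mat 1)
      = (1 / (\<sigma>\<^sup>2 + lam)) *\<^sub>R (F ** transpose A)"
    by (simp add: matrix_inv_mat matrix_mul_mat)
  have least_squares: "F ** transpose A ** matrix_inv (A ** transpose A)
      = (1 / \<sigma>\<^sup>2) *\<^sub>R (F ** transpose A)"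
    using \<open>\<sigma>\<^sup>2 \<noteq> 0\<close> by (simp add: gram matrix_inv_mat matrix_mul_mat)
  show ?thesis
    unfolding ridge least_squares
    by (intro conjI spectral_risk_eq_card_if_gram_eq_mat[OF gram \<open>\<sigma>\<^sup>2 \<noteq> 0\<close>])
      (use assms(4) \<open>\<sigma>\<^sup>2 + lam \<noteq> 0\<close> \<open>\<sigma>\<^sup>2 \<noteq> 0\<close> in simp_all)
qed

end
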